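(* If $\mathcal{I}$ is a hereditary weak P-ideal, then $\omega_1$ with the order topology is in $\mathrm{FinBW}(\mathcal{I})$. In particular, there is a non-compact space in $\mathrm{FinBW}(\mathcal{I})$.
   Context: An ideal on an infinite countable set $X$ is a family $\mathcal{I}\subseteq\mathcal{P}(X)$ closed under subsets and finite unions, containing all finite subsets, with $X\notin\mathcal{I}$. $\mathcal{I}|Y=\{A\cap Y:A\in\mathcal{I}\}$. A space $X$ is in $\mathrm{FinBW}(\mathcal{I})$ if $X$ is Hausdorff and for every sequence $(x_n)_{n\in\bigcup\mathcal{I}}$ in $X$ there is $A\notin\mathcal{I}$ with $(x_n)_{n\in A}$ convergent in $X$. $\mathrm{Fin}^2$: ideal on $\omega^2$ of all $A$ with only finitely many $n$ such that $\{m:(n,m)\in A\}$ is infinite. $\mathcal{I}\sqsubseteq\mathcal{J}$: there is a bijection $f:\bigcup\mathcal{J}\to\bigcup\mathcal{I}$ with $f^{-1}[A]\in\mathcal{J}$ for all $A\in\mathcal{I}$. $\mathcal{I}$ is a hereditary weak P-ideal if $\mathrm{Fin}^2\not\sqsubseteq\mathcal{I}|A$ for every $A\notin\mathcal{I}$. *)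

theory Defs
  imports "HOL-Analysis.Analysis" "HOL-Library.Countable_Set"
begin

definition is_ideal :: "'a set \<Rightarrow> 'a set set \<Rightarrow> bool" where
  "is_ideal X I \<longleftrightarrow> I \<subseteq> Pow X
     \<and> (\<forall>A\<in>I. \<forall>B. B \<subseteq> A \<longrightarrow> B \<in> I)
     \<and> (\<forall>A\<in>I. \<forall>B\<in>I. A \<union> B \<in> I)
     \<and> (\<forall>F. finite F \<and> F \<subseteq> X \<longrightarrow> F \<in> I)
     \<and> X \<notin> I"

definition ideal_restr :: "'a set set \<Rightarrow> 'a set \<Rightarrow> 'a set set" where
  "ideal_restr I Y = (\<lambda>A. A \<inter> Y) ` I"

definition Fin2 :: "(nat \<times> nat) set set" where
  "Fin2 = {A. finite {n. infinite {m. (n, m) \<in> A}}}"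

definition ideal_below :: "'a set set \<Rightarrow> 'b set set \<Rightarrow> bool" where
  "ideal_below I J \<longleftrightarrow> (\<exists>f. bij_betw f (\<Union>J) (\<Union>I) \<and> (\<forall>A\<in>I. f -` A \<inter> \<Union>J \<in> J))"

definition hereditary_weak_P :: "'a set set \<Rightarrow> bool" where
  "hereditary_weak_P I \<longleftrightarrow> (\<forall>A. A \<subseteq> \<Union>I \<and> A \<notin> I \<longrightarrow> \<not> ideal_below Fin2 (ideal_restr I A))"

text \<open>FinBW(I): Hausdorff, and every sequence indexed by the carrier of I has a
  subsequence indexed by an I-positive set that converges (along the cofinite filter on A).\<close>
definition FinBW :: "'a set set \<Rightarrow> 'b topology \<Rightarrow> bool" where
  "FinBW I T \<longleftrightarrow> Hausdorff_space T \<and>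
     (\<forall>x. x ` (\<Union>I) \<subseteq> topspace T \<longrightarrow>
        (\<exists>A. A \<subseteq> \<Union>I \<and> A \<notin> I \<and>
           (\<exists>L. limitin T x L (inf cofinite (principal A)))))"

definition ord_topology :: "'c rel \<Rightarrow> 'c topology" where
  "ord_topology r = topology_generated_by
     ({Field r} \<union> {{y \<in> Field r. (x, y) \<in> r \<and> y \<noteq> x} | x. x \<in> Field r}
                \<union> {{y \<in> Field r. (y, x) \<in> r \<and> y \<noteq> x} | x. x \<in> Field r})"

text \<open>r is (a copy of) omega_1: an uncountable well-order all of whose proper
  initial segments are countable.\<close>
definition is_omega1 :: "'c rel \<Rightarrow> bool" where
  "is_omega1 r \<longleftrightarrow> Well_order r \<and> uncountable (Field r)
     \<and> (\<forall>a\<in>Field r. countable (underS r a))"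

end

theory Submission
  imports Defs
begin

text \<open>Let \<open>x\<close> be a sequence in \<open>\<omega>\<^sub>1\<close> indexed by \<open>X\<close>. Its range is countable, hence bounded,
  so there is a least \<open>b\<close> such that \<open>x n \<le> b\<close> for \<open>\<I>\<close>-positively many \<open>n\<close>. If \<open>x n = b\<close>
  positively often we are done. Otherwise the set \<open>C\<close> of \<open>n\<close> with \<open>x n < b\<close> is positive;
  enumerate the countably many predecessors of \<open>b\<close> as \<open>e 0, e 1, \<dots>\<close> and let \<open>k n\<close> be the
  least \<open>j\<close> with \<open>x n \<le> e j\<close>. By minimality of \<open>b\<close> every fibre of \<open>k\<close> is in \<open>\<I>\<close>. For a
  hereditary weak P-ideal some positive \<open>A \<subseteq> C\<close> meets every fibre finitely: otherwise the
  union of the infinite fibres is a positive set on which these fibres, taken as the rows,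
  exhibit a copy of \<open>Fin\<^sup>2\<close>. Finite fibres on \<open>A\<close> say exactly that \<open>x\<close> converges to \<open>b\<close>
  along \<open>A\<close>. Finally, \<open>\<omega>\<^sub>1\<close> is not compact: the open initial segments cover it, but finitely
  many of them cover only countably many points.\<close>

section \<open>Ideals and \<open>Fin\<^sup>2\<close>\<close>

lemma is_ideal_Union:
  assumes "is_ideal X I"
  shows "\<Union>I = X"
proof
  show "\<Union>I \<subseteq> X"
    using assms by (auto simp: is_ideal_def)
  have "{x} \<in> I" if "x \<in> X" for x
    using assms that by (simp add: is_ideal_def)
  then show "X \<subseteq> \<Union>I"
    by blast
qed

lemma is_ideal_subset: "is_ideal X I \<Longrightarrow> A \<in> I \<Longrightarrow> B \<subseteq> A \<Longrightarrow> B \<in> I"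
  by (simp add: is_ideal_def)

lemma is_ideal_Un: "is_ideal X I \<Longrightarrow> A \<in> I \<Longrightarrow> B \<in> I \<Longrightarrow> A \<union> B \<in> I"
  by (simp add: is_ideal_def)

lemma is_ideal_empty: "is_ideal X I \<Longrightarrow> {} \<in> I"
  by (simp add: is_ideal_def)

lemma is_ideal_UN:
  assumes "is_ideal X I" and "finite J" and "\<And>j. j \<in> J \<Longrightarrow> F j \<in> I"
  shows "(\<Union>j\<in>J. F j) \<in> I"
  using assms(2,3) by induction (auto simp: is_ideal_empty[OF assms(1)] is_ideal_Un[OF assms(1)])

lemma Union_Fin2: "\<Union>Fin2 = UNIV"
proof -
  have "{p} \<in> Fin2" for p :: "nat \<times> nat"
  proof -
    have "finite {m. (n, m) \<in> {p}}" for n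
      by (rule finite_subset[of _ "{snd p}"]) auto
    then show ?thesis
      by (simp add: Fin2_def)
  qed
  then show ?thesis
    by blast
qed

lemma Union_ideal_restr: "is_ideal X I \<Longrightarrow> H \<subseteq> X \<Longrightarrow> \<Union>(ideal_restr I H) = H"
  unfolding ideal_restr_def using is_ideal_Union[of X I] by blast

lemma bij_betw_nat_prod_fibres:
  assumes "countable H" and "infinite (k ` H)"
    and fibres: "\<And>j. j \<in> k ` H \<Longrightarrow> infinite {n\<in>H. k n = j}"
  obtains f :: "'a \<Rightarrow> nat \<times> nat"
  where "bij_betw f H UNIV" and "\<And>a b. a \<in> H \<Longrightarrow> b \<in> H \<Longrightarrow> fst (f a) = fst (f b) \<longleftrightarrow> k a = k b"
proof -
  obtain idx :: "'b \<Rightarrow> nat" where idx: "bij_betw idx (k ` H) UNIV"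
    using countableE_infinite[OF countable_image[OF assms(1)] assms(2)] by blast
  have "\<exists>e :: 'a \<Rightarrow> nat. bij_betw e {n\<in>H. k n = j} UNIV" if "j \<in> k ` H" for j
  proof -
    have "countable {n\<in>H. k n = j}"
      using assms(1) by (rule countable_subset[rotated]) auto
    then show ?thesis
      using countableE_infinite fibres[OF that] by metis
  qed
  then obtain e :: "'b \<Rightarrow> 'a \<Rightarrow> nat"
    where e: "\<And>j. j \<in> k ` H \<Longrightarrow> bij_betw (e j) {n\<in>H. k n = j} UNIV"
    by metis
  define f where "f n = (idx (k n), e (k n) n)" for n
  have same_row: "fst (f a) = fst (f b) \<longleftrightarrow> k a = k b" if "a \<in> H" "b \<in> H" for a b
    using that bij_betw_imp_inj_on[OF idx] by (auto simp: f_def inj_on_def)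
  have "inj_on f H"
  proof
    fix a b assume ab: "a \<in> H" "b \<in> H" "f a = f b"
    then have "k a = k b"
      using same_row by metis
    with ab show "a = b"
      using bij_betw_imp_inj_on[OF e[of "k a"]] by (auto simp: f_def inj_on_def)
  qed
  moreover have "f ` H = UNIV"
  proof safe
    fix p q
    obtain j where j: "j \<in> k ` H" "idx j = p"
      using bij_betw_imp_surj_on[OF idx] by (metis UNIV_I imageE)
    have "q \<in> e j ` {n\<in>H. k n = j}"
      using bij_betw_imp_surj_on[OF e[OF j(1)]] by simp
    then obtain n where "n \<in> H" "k n = j" "e j n = q"
      by blast
    then show "(p, q) \<in> f ` H"
      using j by (auto simp: f_def intro!: image_eqI)
  qed auto
  ultimately have "bij_betw f H UNIV"
    by (simp add: bij_betw_def)
  then show thesis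
    using same_row by (rule that)
qed

lemma Fin2_preimage_in_ideal:
  fixes f :: "'a \<Rightarrow> nat \<times> nat"
  assumes I: "is_ideal X I" and f: "inj_on f H" and "A \<in> Fin2"
    and rows: "\<And>i. {n\<in>H. fst (f n) = i} \<in> I"
    and small: "\<And>B. B \<subseteq> H \<Longrightarrow> (\<And>i. finite {n\<in>B. fst (f n) = i}) \<Longrightarrow> B \<in> I"
  shows "f -` A \<inter> H \<in> I"
proof -
  define J where "J = {i. infinite {m. (i, m) \<in> A}}"
  have "finite J"
    using \<open>A \<in> Fin2\<close> by (simp add: J_def Fin2_def)
  define B where "B = {n \<in> f -` A \<inter> H. fst (f n) \<notin> J}"
  have "(\<Union>i\<in>J. {n\<in>H. fst (f n) = i}) \<in> I"
    by (rule is_ideal_UN[OF I \<open>finite J\<close> rows])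
  moreover have "B \<in> I"
  proof (rule small)
    show "B \<subseteq> H"
      by (auto simp: B_def)
    fix i
    show "finite {n\<in>B. fst (f n) = i}"
    proof (cases "i \<in> J")
      case False
      have "f ` {n\<in>B. fst (f n) = i} \<subseteq> {i} \<times> {m. (i, m) \<in> A}"
        by (auto simp: B_def image_subset_iff mem_Times_iff)
      moreover have "finite ({i} \<times> {m. (i, m) \<in> A})"
        using False by (simp add: J_def)
      moreover have "inj_on f {n\<in>B. fst (f n) = i}"
        using f by (rule inj_on_subset) (auto simp: B_def)
      ultimately show ?thesis
        by (meson finite_imageD finite_subset)
    next
      case True
      then have "{n\<in>B. fst (f n) = i} = {}"
        by (auto simp: B_def)
      then show ?thesis
        by (metis finite.emptyI)
    qed
  qed
  ultimately have "(\<Union>i\<in>J. {n\<in>H. fst (f n) = i}) \<union> B \<in> I"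
    by (rule is_ideal_Un[OF I])
  moreover have "f -` A \<inter> H \<subseteq> (\<Union>i\<in>J. {n\<in>H. fst (f n) = i}) \<union> B"
    by (auto simp: B_def)
  ultimately show ?thesis
    by (rule is_ideal_subset[OF I])
qed

lemma Fin2_below_ideal_restr:
  fixes k :: "'a \<Rightarrow> 'b"
  assumes I: "is_ideal X I" and "countable X" and "H \<subseteq> X" and "infinite (k ` H)"
    and infinite_fibres: "\<And>j. j \<in> k ` H \<Longrightarrow> infinite {n\<in>H. k n = j}"
    and fibres: "\<And>j. {n\<in>H. k n = j} \<in> I"
    and small: "\<And>B. B \<subseteq> H \<Longrightarrow> (\<And>j. finite {n\<in>B. k n = j}) \<Longrightarrow> B \<in> I"
  shows "ideal_below Fin2 (ideal_restr I H)"
proof -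
  have "countable H"
    using \<open>countable X\<close> \<open>H \<subseteq> X\<close> by (rule countable_subset[rotated])
  then obtain f :: "'a \<Rightarrow> nat \<times> nat" where f: "bij_betw f H UNIV"
    and same_row: "\<And>a b. a \<in> H \<Longrightarrow> b \<in> H \<Longrightarrow> fst (f a) = fst (f b) \<longleftrightarrow> k a = k b"
    using bij_betw_nat_prod_fibres \<open>infinite (k ` H)\<close> infinite_fibres by blast
  have rows: "{n\<in>H. fst (f n) = i} \<in> I" for i
  proof -
    have "(i, 0) \<in> f ` H"
      using bij_betw_imp_surj_on[OF f] by simp
    then obtain a where "a \<in> H" "fst (f a) = i"
      by (metis fst_conv imageE)
    then have "{n\<in>H. fst (f n) = i} \<subseteq> {n\<in>H. k n = k a}"
      using same_row by auto
    then show ?thesis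
      by (rule is_ideal_subset[OF I fibres])
  qed
  have small_rows: "B \<in> I" if B: "B \<subseteq> H" "\<And>i. finite {n\<in>B. fst (f n) = i}" for B
  proof (rule small[OF B(1)])
    fix j
    show "finite {n\<in>B. k n = j}"
    proof (cases "\<exists>a\<in>B. k a = j")
      case True
      then obtain a where "a \<in> B" "k a = j"
        by blast
      then have "{n\<in>B. k n = j} = {n\<in>B. fst (f n) = fst (f a)}"
        using same_row B(1) by auto
      then show ?thesis
        using B(2) by simp
    next
      case False
      then have "{n\<in>B. k n = j} = {}"
        by blast
      then show ?thesis
        by (metis finite.emptyI)
    qed
  qed
  have "f -` A \<inter> H \<in> ideal_restr I H" if "A \<in> Fin2" for A
    using imageI[OF Fin2_preimage_in_ideal[OF I bij_betw_imp_inj_on[OF f] that rows small_rows],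
        of "\<lambda>B. B \<inter> H"]
    by (simp add: ideal_restr_def)
  then show ?thesis
    unfolding ideal_below_def Union_Fin2 Union_ideal_restr[OF I \<open>H \<subseteq> X\<close>] using f by auto
qed

lemma is_ideal_infinite_image:
  assumes I: "is_ideal X I" and "H \<notin> I" and fibres: "\<And>j. {n\<in>H. k n = j} \<in> I"
  shows "infinite (k ` H)"
proof
  assume "finite (k ` H)"
  then have "(\<Union>j\<in>k ` H. {n\<in>H. k n = j}) \<in> I"
    by (rule is_ideal_UN[OF I _ fibres])
  moreover have "(\<Union>j\<in>k ` H. {n\<in>H. k n = j}) = H"
    by blast
  ultimately show False
    using \<open>H \<notin> I\<close> by simp
qed

lemma hereditary_weak_P_finite_fibres:
  fixes k :: "'a \<Rightarrow> 'b"
  assumes I: "is_ideal X I" and "countable X" and "hereditary_weak_P I"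
    and C: "C \<subseteq> X" "C \<notin> I" and fibres: "\<And>j. {n\<in>C. k n = j} \<in> I"
  shows "\<exists>A\<subseteq>C. A \<notin> I \<and> (\<forall>j. finite {n\<in>A. k n = j})"
proof (rule ccontr)
  assume "\<not> ?thesis"
  then have small: "B \<in> I" if "B \<subseteq> C" "\<And>j. finite {n\<in>B. k n = j}" for B
    using that by auto
  define H where "H = {n\<in>C. infinite {m\<in>C. k m = k n}}"
  have "H \<subseteq> C" "H \<subseteq> X"
    using C(1) by (auto simp: H_def)
  have same_fibre: "{n\<in>H. k n = j} = {n\<in>C. k n = j}" if "j \<in> k ` H" for j
    using that by (auto simp: H_def)
  have "C - H \<in> I"
  proof (rule small)
    fix j
    show "finite {n\<in>C - H. k n = j}"
    proof (cases "finite {n\<in>C. k n = j}")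
      case True
      then show ?thesis
        by (rule finite_subset[rotated]) auto
    next
      case False
      then have "{n\<in>C - H. k n = j} = {}"
        by (auto simp: H_def)
      then show ?thesis
        by (metis finite.emptyI)
    qed
  qed auto
  then have "H \<notin> I"
    using C(2) is_ideal_Un[OF I, of "C - H" H] \<open>H \<subseteq> C\<close> by (auto simp: Un_absorb2)
  have H_fibres: "{n\<in>H. k n = j} \<in> I" for j
    by (rule is_ideal_subset[OF I fibres[of j]]) (auto simp: H_def)
  have "ideal_below Fin2 (ideal_restr I H)"
  proof (rule Fin2_below_ideal_restr[OF I \<open>countable X\<close> \<open>H \<subseteq> X\<close> _ _ H_fibres])
    show "infinite (k ` H)"
      by (rule is_ideal_infinite_image[OF I \<open>H \<notin> I\<close> H_fibres])
    show "infinite {n\<in>H. k n = j}" if "j \<in> k ` H" for j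
      using that same_fibre[OF that] by (auto simp: H_def)
    show "B \<in> I" if "B \<subseteq> H" "\<And>j. finite {n\<in>B. k n = j}" for B
      using that \<open>H \<subseteq> C\<close> small by blast
  qed
  moreover have "H \<subseteq> \<Union>I"
    using \<open>H \<subseteq> X\<close> is_ideal_Union[OF I] by simp
  ultimately show False
    using \<open>hereditary_weak_P I\<close> \<open>H \<notin> I\<close> unfolding hereditary_weak_P_def by simp
qed

section \<open>The order topology of a linear order\<close>

lemma Linear_order_not_le_imp_aboveS:
  "Linear_order r \<Longrightarrow> a \<in> Field r \<Longrightarrow> b \<in> Field r \<Longrightarrow> (a, b) \<notin> r \<Longrightarrow> a \<in> aboveS r b"
  using Linear_order_in_diff_Id[of r a b] by (auto simp: aboveS_def)

lemma aboveS_antimono: "trans r \<Longrightarrow> antisym r \<Longrightarrow> (a, b) \<in> r \<Longrightarrow> aboveS r b \<subseteq> aboveS r a"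
  unfolding aboveS_def trans_def antisym_def by blast

lemma Linear_order_aboveS_Int:
  assumes lo: "Linear_order r" and "a \<in> Field r" and "b \<in> Field r"
  shows "\<exists>c\<in>{a, b}. aboveS r c \<subseteq> aboveS r a \<inter> aboveS r b"
proof -
  have tr: "trans r" and an: "antisym r"
    using lo by (auto simp: order_on_defs)
  have "(a, b) \<in> r \<or> (b, a) \<in> r"
    using Linear_order_in_diff_Id[OF lo \<open>a \<in> Field r\<close> \<open>b \<in> Field r\<close>] by blast
  then show ?thesis
    using aboveS_antimono[OF tr an] by blast
qed

lemma ord_topology_eq_generated:
  "ord_topology r = topology_generated_by ({Field r} \<union> aboveS r ` Field r \<union> underS r ` Field r)"
proof -
  have "aboveS r x = {y \<in> Field r. (x, y) \<in> r \<and> y \<noteq> x}"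
    and "underS r x = {y \<in> Field r. (y, x) \<in> r \<and> y \<noteq> x}" for x
    by (auto simp: aboveS_def underS_def intro: FieldI1 FieldI2)
  then show ?thesis
    unfolding ord_topology_def by (simp add: Setcompr_eq_image)
qed

lemma topspace_ord_topology [simp]: "topspace (ord_topology r) = Field r"
  by (auto simp: ord_topology_eq_generated aboveS_def underS_def intro: FieldI1 FieldI2)

lemma openin_ord_topology_aboveS: "x \<in> Field r \<Longrightarrow> openin (ord_topology r) (aboveS r x)"
  unfolding ord_topology_eq_generated openin_topology_generated_by_iff
  by (rule generate_topology_on.Basis) blast

lemma openin_ord_topology_underS: "x \<in> Field r \<Longrightarrow> openin (ord_topology r) (underS r x)"
  unfolding ord_topology_eq_generated openin_topology_generated_by_iff
  by (rule generate_topology_on.Basis) blast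

lemma openin_ord_topology_left_interval:
  assumes lo: "Linear_order r" and "openin (ord_topology r) U" and "y \<in> U"
    and "underS r y \<noteq> {}"
  shows "\<exists>g\<in>underS r y. aboveS r g \<inter> under r y \<subseteq> U"
proof -
  have tr: "trans r" and an: "antisym r"
    using lo by (auto simp: order_on_defs)
  obtain z where z: "z \<in> underS r y"
    using assms(4) by blast
  have "generate_topology_on ({Field r} \<union> aboveS r ` Field r \<union> underS r ` Field r) U"
    using assms(2) unfolding ord_topology_eq_generated openin_topology_generated_by_iff .
  then show ?thesis
    using \<open>y \<in> U\<close>
  proof induction
    case (Int a b)
    obtain g1 where g1: "g1 \<in> underS r y" "aboveS r g1 \<inter> under r y \<subseteq> a"
      using Int.IH(1) Int.prems by blast
    obtain g2 where g2: "g2 \<in> underS r y" "aboveS r g2 \<inter> under r y \<subseteq> b"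
      using Int.IH(2) Int.prems by blast
    have "g1 \<in> Field r" "g2 \<in> Field r"
      using g1(1) g2(1) by (auto simp: underS_def intro: FieldI1)
    then obtain g where "g \<in> {g1, g2}" "aboveS r g \<subseteq> aboveS r g1 \<inter> aboveS r g2"
      using Linear_order_aboveS_Int[OF lo] by blast
    then show ?case
      using g1 g2 by blast
  next
    case (UN K)
    then show ?case
      by blast
  next
    case (Basis s)
    then consider "s = Field r" | x where "s = aboveS r x" | x where "s = underS r x"
      by blast
    then show ?case
    proof cases
      case 1
      then show ?thesis
        using z by (auto simp: aboveS_def intro: FieldI2)
    next
      case (2 x)
      then show ?thesis
        using Basis.prems by (intro bexI[of _ x]) (auto simp: aboveS_def underS_def)
    next
      case (3 x)
      have "under r y \<subseteq> underS r x"
        using Basis.prems 3 tr an unfolding under_def underS_def trans_def antisym_def by blast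
      then show ?thesis
        using z 3 by blast
    qed
  qed simp
qed

lemma limitin_ord_topology_from_below:
  assumes lo: "Linear_order r" and "b \<in> Field r"
    and below: "\<And>n. n \<in> A \<Longrightarrow> x n \<in> under r b"
    and fin: "\<And>g. g \<in> underS r b \<Longrightarrow> finite {n\<in>A. x n \<in> under r g}"
  shows "limitin (ord_topology r) x b (inf cofinite (principal A))"
  unfolding limitin_def eventually_inf_principal eventually_cofinite
proof (intro conjI allI impI)
  show "b \<in> topspace (ord_topology r)"
    using \<open>b \<in> Field r\<close> by simp
  fix U assume U: "openin (ord_topology r) U \<and> b \<in> U"
  show "finite {n. \<not> (n \<in> A \<longrightarrow> x n \<in> U)}"
  proof (cases "underS r b = {}")
    case True
    then have "x n = b" if "n \<in> A" for n
      using below[OF that] by (auto simp: under_def underS_def)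
    then show ?thesis
      using U by simp
  next
    case False
    then obtain g where g: "g \<in> underS r b" "aboveS r g \<inter> under r b \<subseteq> U"
      using openin_ord_topology_left_interval[OF lo] U by blast
    have "{n. \<not> (n \<in> A \<longrightarrow> x n \<in> U)} \<subseteq> {n\<in>A. x n \<in> under r g}"
    proof safe
      fix n assume "n \<in> A" "x n \<notin> U"
      show "x n \<in> under r g"
      proof (rule ccontr)
        assume "x n \<notin> under r g"
        moreover have "x n \<in> Field r" "g \<in> Field r"
          using below[OF \<open>n \<in> A\<close>] g(1) by (auto simp: under_def underS_def intro: FieldI1)
        ultimately have "x n \<in> aboveS r g"
          using Linear_order_not_le_imp_aboveS[OF lo] by (simp add: under_def)
        then show False
          using g(2) below[OF \<open>n \<in> A\<close>] \<open>x n \<notin> U\<close> by blast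
      qed
    qed
    then show ?thesis
      using fin[OF g(1)] by (rule finite_subset)
  qed
qed

lemma ord_topology_separates_less:
  assumes an: "antisym r" and "b \<in> aboveS r a"
  shows "\<exists>U V. openin (ord_topology r) U \<and> openin (ord_topology r) V
    \<and> a \<in> U \<and> b \<in> V \<and> disjnt U V"
proof (cases "aboveS r a \<inter> underS r b = {}")
  case True
  have "a \<in> Field r" "b \<in> Field r"
    using assms(2) by (auto simp: aboveS_def intro: FieldI1 FieldI2)
  moreover have "a \<in> underS r b" "disjnt (underS r b) (aboveS r a)"
    using assms(2) True by (auto simp: aboveS_def underS_def disjnt_def)
  ultimately show ?thesis
    using assms(2) openin_ord_topology_aboveS openin_ord_topology_underS
    by (intro exI[of _ "underS r b"] exI[of _ "aboveS r a"]) auto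
next
  case False
  then obtain c where "c \<in> aboveS r a" "c \<in> underS r b"
    by blast
  then have "c \<in> Field r" "a \<in> underS r c" "b \<in> aboveS r c"
    by (auto simp: aboveS_def underS_def intro: FieldI2)
  moreover have "disjnt (underS r c) (aboveS r c)"
    using an by (auto simp: aboveS_def underS_def disjnt_def antisym_def)
  ultimately show ?thesis
    using openin_ord_topology_aboveS openin_ord_topology_underS
    by (intro exI[of _ "underS r c"] exI[of _ "aboveS r c"]) auto
qed

lemma Hausdorff_space_ord_topology:
  assumes lo: "Linear_order r"
  shows "Hausdorff_space (ord_topology r)"
  unfolding Hausdorff_space_def topspace_ord_topology
proof (intro allI impI)
  have an: "antisym r"
    using lo by (auto simp: order_on_defs)
  fix a b assume "a \<in> Field r \<and> b \<in> Field r \<and> a \<noteq> b"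
  then consider "b \<in> aboveS r a" | "a \<in> aboveS r b"
    using Linear_order_not_le_imp_aboveS[OF lo] by (auto simp: aboveS_def)
  then show "\<exists>U V. openin (ord_topology r) U \<and> openin (ord_topology r) V
    \<and> a \<in> U \<and> b \<in> V \<and> disjnt U V"
  proof cases
    case 1
    then show ?thesis
      by (rule ord_topology_separates_less[OF an])
  next
    case 2
    then obtain U V where "openin (ord_topology r) U" "openin (ord_topology r) V"
      "b \<in> U" "a \<in> V" "disjnt U V"
      using ord_topology_separates_less[OF an] by blast
    then show ?thesis
      using disjnt_sym by blast
  qed
qed

lemma countable_underS_rank:
  assumes "Refl r" and "countable (underS r b)" and "underS r b \<noteq> {}"
  obtains e :: "nat \<Rightarrow> 'a" and rank :: "'a \<Rightarrow> nat"
  where "range e = underS r b"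
    and "\<And>y. y \<in> underS r b \<Longrightarrow> y \<in> under r (e (rank y))"
    and "\<And>y j. y \<in> under r (e j) \<Longrightarrow> rank y \<le> j"
proof -
  define e where "e = from_nat_into (underS r b)"
  have range_e: "range e = underS r b"
    unfolding e_def using assms(2,3) by simp
  define rank where "rank y = (LEAST j. y \<in> under r (e j))" for y
  show thesis
  proof (rule that[OF range_e])
    fix y assume y: "y \<in> underS r b"
    then obtain j where "e j = y"
      using range_e by (metis rangeE)
    moreover have "y \<in> Field r"
      using y by (auto simp: underS_def intro: FieldI1)
    ultimately have "y \<in> under r (e j)"
      using assms(1) by (auto simp: under_def refl_on_def)
    then show "y \<in> under r (e (rank y))"
      unfolding rank_def by (rule LeastI)
  next
    fix y j assume "y \<in> under r (e j)"
    then show "rank y \<le> j"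
      unfolding rank_def by (simp add: Least_le)
  qed
qed

lemma hereditary_weak_P_limitin_from_below:
  assumes I: "is_ideal X I" "countable X" "hereditary_weak_P I"
    and lo: "Linear_order r" and "countable (underS r b)"
    and C: "C \<subseteq> X" "C \<notin> I" "\<And>n. n \<in> C \<Longrightarrow> x n \<in> underS r b"
    and small: "\<And>c. c \<in> underS r b \<Longrightarrow> {n\<in>C. x n \<in> under r c} \<in> I"
  shows "\<exists>A\<subseteq>C. A \<notin> I \<and> limitin (ord_topology r) x b (inf cofinite (principal A))"
proof -
  have "C \<noteq> {}"
    using C(2) is_ideal_empty[OF I(1)] by auto
  then obtain n0 where "n0 \<in> C"
    by blast
  then have "underS r b \<noteq> {}" "b \<in> Field r"
    using C(3) by (auto simp: underS_def intro: FieldI2)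
  have "Refl r"
    using lo by (simp add: order_on_defs)
  obtain e rank where range_e: "range (e :: nat \<Rightarrow> _) = underS r b"
    and rank: "\<And>y. y \<in> underS r b \<Longrightarrow> y \<in> under r (e (rank y))"
    and rank_le: "\<And>y j. y \<in> under r (e j) \<Longrightarrow> rank y \<le> j"
    using countable_underS_rank[OF \<open>Refl r\<close> \<open>countable (underS r b)\<close> \<open>underS r b \<noteq> {}\<close>]
    by blast
  have "{n\<in>C. rank (x n) = j} \<in> I" for j
  proof (rule is_ideal_subset[OF I(1) small[of "e j"]])
    show "e j \<in> underS r b"
      using range_e by blast
    show "{n\<in>C. rank (x n) = j} \<subseteq> {n\<in>C. x n \<in> under r (e j)}"
      using rank C(3) by auto
  qed
  then have "\<exists>A\<subseteq>C. A \<notin> I \<and> (\<forall>j. finite {n\<in>A. rank (x n) = j})"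
    by (rule hereditary_weak_P_finite_fibres[OF I C(1,2)])
  then obtain A where A: "A \<subseteq> C" "A \<notin> I" "\<And>j. finite {n\<in>A. rank (x n) = j}"
    by blast
  have "limitin (ord_topology r) x b (inf cofinite (principal A))"
  proof (rule limitin_ord_topology_from_below[OF lo \<open>b \<in> Field r\<close>])
    show "x n \<in> under r b" if "n \<in> A" for n
      using C(3) A(1) that by (auto simp: under_def underS_def)
  next
    fix g assume "g \<in> underS r b"
    then obtain j where "g = e j"
      using range_e by (metis rangeE)
    then have "{n\<in>A. x n \<in> under r g} \<subseteq> (\<Union>i\<le>j. {n\<in>A. rank (x n) = i})"
      using rank_le by blast
    moreover have "finite (\<Union>i\<le>j. {n\<in>A. rank (x n) = i})"
      by (rule finite_UN_I) (simp_all add: A(3))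
    ultimately show "finite {n\<in>A. x n \<in> under r g}"
      by (rule finite_subset)
  qed
  with A(1,2) show ?thesis
    by auto
qed

lemma hereditary_weak_P_limitin_at_least_bound:
  assumes I: "is_ideal X I" "countable X" "hereditary_weak_P I"
    and lo: "Linear_order r" and "b \<in> Field r" and "countable (underS r b)"
    and positive: "{n\<in>X. x n \<in> under r b} \<notin> I"
    and small: "\<And>c. c \<in> underS r b \<Longrightarrow> {n\<in>X. x n \<in> under r c} \<in> I"
  shows "\<exists>A\<subseteq>X. A \<notin> I \<and> limitin (ord_topology r) x b (inf cofinite (principal A))"
proof -
  define F where "F = {n\<in>X. x n = b}"
  define C where "C = {n\<in>X. x n \<in> underS r b}"
  have "(b, b) \<in> r"
    using lo \<open>b \<in> Field r\<close> by (auto simp: order_on_defs refl_on_def)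
  then have "{n\<in>X. x n \<in> under r b} = F \<union> C"
    by (auto simp: F_def C_def under_def underS_def)
  then have "F \<notin> I \<or> C \<notin> I"
    using positive is_ideal_Un[OF I(1)] by metis
  then show ?thesis
  proof
    assume "F \<notin> I"
    have "limitin (ord_topology r) x b (inf cofinite (principal F))"
      by (rule limitin_eventually) (simp_all add: \<open>b \<in> Field r\<close> eventually_inf_principal F_def)
    moreover have "F \<subseteq> X"
      by (simp add: F_def)
    ultimately show ?thesis
      using \<open>F \<notin> I\<close> by blast
  next
    assume "C \<notin> I"
    have "\<exists>A\<subseteq>C. A \<notin> I \<and> limitin (ord_topology r) x b (inf cofinite (principal A))"
    proof (rule hereditary_weak_P_limitin_from_below[OF I lo \<open>countable (underS r b)\<close> _ \<open>C \<notin> I\<close>])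
      show "C \<subseteq> X" "\<And>n. n \<in> C \<Longrightarrow> x n \<in> underS r b"
        by (auto simp: C_def)
      fix c assume "c \<in> underS r b"
      then show "{n\<in>C. x n \<in> under r c} \<in> I"
        by (rule is_ideal_subset[OF I(1) small]) (auto simp: C_def)
    qed
    then show ?thesis
      by (auto simp: C_def)
  qed
qed

section \<open>\<open>\<omega>\<^sub>1\<close>\<close>

lemma is_omega1D:
  assumes "is_omega1 r"
  shows "Linear_order r" "wf (r - Id)" "uncountable (Field r)"
    "\<And>a. a \<in> Field r \<Longrightarrow> countable (underS r a)"
  using assms by (auto simp: is_omega1_def well_order_on_def)

lemma omega1_countable_bounded:
  assumes om: "is_omega1 r" and "countable S" and "S \<subseteq> Field r"
  shows "\<exists>a\<in>Field r. S \<subseteq> underS r a"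
proof -
  have "countable (S \<union> (\<Union>s\<in>S. underS r s))"
    using assms is_omega1D(4)[OF om] by blast
  then obtain a where a: "a \<in> Field r" "a \<notin> S \<union> (\<Union>s\<in>S. underS r s)"
    using is_omega1D(3)[OF om] by (metis countable_subset subsetI)
  have "s \<in> underS r a" if "s \<in> S" for s
  proof -
    have "(a, s) \<notin> r"
      using a(2) that by (auto simp: underS_def)
    then have "a \<in> aboveS r s"
      using Linear_order_not_le_imp_aboveS[OF is_omega1D(1)[OF om]] a(1) that \<open>S \<subseteq> Field r\<close>
      by blast
    then show ?thesis
      by (auto simp: aboveS_def underS_def)
  qed
  with a(1) show ?thesis
    by blast
qed

lemma omega1_not_compact_space:
  assumes om: "is_omega1 r"
  shows "\<not> compact_space (ord_topology r)"
proof
  assume "compact_space (ord_topology r)"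
  moreover have "\<forall>U\<in>underS r ` Field r. openin (ord_topology r) U"
    by (simp add: openin_ord_topology_underS)
  moreover have "Field r \<subseteq> \<Union>(underS r ` Field r)"
  proof
    fix y assume "y \<in> Field r"
    then obtain a where "a \<in> Field r" "{y} \<subseteq> underS r a"
      using omega1_countable_bounded[OF om, of "{y}"] by auto
    then show "y \<in> \<Union>(underS r ` Field r)"
      by blast
  qed
  ultimately obtain \<F> where "finite \<F>" "\<F> \<subseteq> underS r ` Field r" "Field r \<subseteq> \<Union>\<F>"
    unfolding compact_space_alt topspace_ord_topology by meson
  then obtain G where G: "finite G" "G \<subseteq> Field r" "\<F> = underS r ` G"
    using finite_subset_image by meson
  have "countable (\<Union>(underS r ` G))"
    using G is_omega1D(4)[OF om] by (auto intro: countable_finite)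
  moreover have "Field r \<subseteq> \<Union>(underS r ` G)"
    using \<open>Field r \<subseteq> \<Union>\<F>\<close> G(3) by simp
  ultimately show False
    using is_omega1D(3)[OF om] countable_subset by blast
qed

lemma ex_omega1:
  assumes "uncountable (UNIV :: 'a set)"
  shows "\<exists>r :: 'a rel. is_omega1 r"
proof -
  obtain r0 :: "'a rel" where "well_order_on UNIV r0"
    using well_order_on by blast
  then have wo: "Well_order r0" and "Field r0 = UNIV"
    using well_order_on_Well_order by auto
  then have "wf (r0 - Id)"
    by (simp add: well_order_on_def)
  define W where "W = {a. countable (underS r0 a)}"
  have "uncountable W"
  proof
    assume "countable W"
    then have "W \<noteq> UNIV"
      using assms by auto
    then have "- W \<noteq> {}"
      by auto
    then obtain a where "a \<notin> W" and least: "\<And>c. (c, a) \<in> r0 - Id \<Longrightarrow> c \<in> W"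
      using wfE_min'[OF \<open>wf (r0 - Id)\<close>] by (metis Compl_iff)
    have "underS r0 a \<subseteq> W"
      using least by (auto simp: underS_def)
    then have "countable (underS r0 a)"
      using \<open>countable W\<close> by (rule countable_subset)
    with \<open>a \<notin> W\<close> show False
      by (simp add: W_def)
  qed
  define r where "r = Restr r0 W"
  have "Field r = W"
    unfolding r_def using wo \<open>Field r0 = UNIV\<close>
    by (simp add: Refl_Field_Restr order_on_defs)
  moreover have "countable (underS r a)" if "a \<in> W" for a
  proof -
    have "underS r a \<subseteq> underS r0 a"
      by (auto simp: r_def underS_def)
    moreover have "countable (underS r0 a)"
      using that by (simp add: W_def)
    ultimately show ?thesis
      by (rule countable_subset)
  qed
  moreover have "Well_order r"
    unfolding r_def using wo by (rule Well_order_Restr)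
  ultimately have "is_omega1 r"
    using \<open>uncountable W\<close> by (simp add: is_omega1_def)
  then show ?thesis
    by blast
qed

lemma omega1_least_positive_bound:
  assumes om: "is_omega1 r" and "countable X" and "X \<notin> I" and x: "x ` X \<subseteq> Field r"
  obtains b where "b \<in> Field r" and "{n\<in>X. x n \<in> under r b} \<notin> I"
    and "\<And>c. c \<in> underS r b \<Longrightarrow> {n\<in>X. x n \<in> under r c} \<in> I"
proof -
  define P where "P = {b \<in> Field r. {n\<in>X. x n \<in> under r b} \<notin> I}"
  obtain a where "a \<in> Field r" "x ` X \<subseteq> underS r a"
    using omega1_countable_bounded[OF om countable_image[OF \<open>countable X\<close>] x] by blast
  then have "{n\<in>X. x n \<in> under r a} = X"
    by (auto simp: under_def underS_def)
  with \<open>a \<in> Field r\<close> \<open>X \<notin> I\<close> have "a \<in> P"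
    by (simp add: P_def)
  then obtain b where "b \<in> P" and least: "\<And>c. (c, b) \<in> r - Id \<Longrightarrow> c \<notin> P"
    using wfE_min[OF is_omega1D(2)[OF om]] by metis
  show thesis
  proof (rule that)
    show "b \<in> Field r" "{n\<in>X. x n \<in> under r b} \<notin> I"
      using \<open>b \<in> P\<close> by (simp_all add: P_def)
    show "{n\<in>X. x n \<in> under r c} \<in> I" if "c \<in> underS r b" for c
      using least[of c] that by (auto simp: P_def underS_def intro: FieldI1)
  qed
qed

lemma FinBW_ord_topology_omega1:
  assumes I: "is_ideal X I" "countable X" "hereditary_weak_P I" and om: "is_omega1 r"
  shows "FinBW I (ord_topology r)"
  unfolding FinBW_def
proof (intro conjI allI impI)
  note lo = is_omega1D(1)[OF om]
  show "Hausdorff_space (ord_topology r)"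
    by (rule Hausdorff_space_ord_topology[OF lo])
  fix x assume "x ` \<Union>I \<subseteq> topspace (ord_topology r)"
  then have "x ` X \<subseteq> Field r"
    using is_ideal_Union[OF I(1)] by simp
  moreover have "X \<notin> I"
    using I(1) by (simp add: is_ideal_def)
  ultimately obtain b where b: "b \<in> Field r" and positive: "{n\<in>X. x n \<in> under r b} \<notin> I"
    and small: "\<And>c. c \<in> underS r b \<Longrightarrow> {n\<in>X. x n \<in> under r c} \<in> I"
    using omega1_least_positive_bound[OF om I(2)] by blast
  have "\<exists>A\<subseteq>X. A \<notin> I \<and> limitin (ord_topology r) x b (inf cofinite (principal A))"
    by (rule hereditary_weak_P_limitin_at_least_bound[OF I lo b is_omega1D(4)[OF om b] positive small])
  then show "\<exists>A. A \<subseteq> \<Union>I \<and> A \<notin> I \<and> (\<exists>L. limitin (ord_topology r) x L (inf cofinite (principal A)))"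
    using is_ideal_Union[OF I(1)] by blast
qed

theorem proposition6p1:
  fixes X :: "'a set" and I :: "'a set set" and r :: "'c rel"
  assumes "is_ideal X I" and "countable X" and "infinite X"
    and "hereditary_weak_P I"
    and "is_omega1 r"
  shows "FinBW I (ord_topology r)
         \<and> (\<exists>T :: nat set topology. FinBW I T \<and> \<not> compact_space T)"
proof
  show "FinBW I (ord_topology r)"
    using FinBW_ord_topology_omega1 assms by blast
  have "uncountable (UNIV :: nat set set)"
    using Cantors_theorem[of "UNIV :: nat set"] by (auto simp: uncountable_def)
  then obtain r' :: "nat set rel" where "is_omega1 r'"
    using ex_omega1 by blast
  then show "\<exists>T :: nat set topology. FinBW I T \<and> \<not> compact_space T"
    using FinBW_ord_topology_omega1[OF assms(1,2,4)] omega1_not_compact_space by blast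
qed

end
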